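(* In the setting where, for $i=1,\dots,n$, $f_i(x_i,\langle u,x_1,\dots,x_{i-1}\rangle)=\tanh(w_i x_i+\beta_i(u,x_1,\dots,x_{i-1}))$ with $w_i\ge0$ and $\beta_i$ continuous, fix $u\in U$, $i\in[n]$, $x_1,\dots,x_i\in\mathbb{R}$, and let $(x_{j,t})_{t\ge0}$ ($j\in[i]$) be defined by $x_{j,0}=x_j$, $x_{j,t}=f_j(x_{j,t-1},\langle u,x_{1,t-1},\dots,x_{j-1,t-1}\rangle)$. Let $x_{j,*}=\lim_{t\to\infty}x_{j,t}$ (which exists for every $j$). Then $x_{i,*}$ is a fixpoint of $h_{i,v}(x)=\tanh(w_i x+v)$, where $v=\beta_1(u)$ if $i=1$ and $v=\beta_i(u,x_{1,*},\dots,x_{i-1,*})$ if $i\ge2$.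
   Context: This concerns the sequence of states of the first $i$ neurons of an $\mathrm{RNC}_+$ (a cascade of recurrent tanh neurons with nonnegative recurrent weights $w_i$ and feedforward-network input functions $\beta_i$) when input $u$ is repeated. *)

theory Defs
  imports "HOL-Analysis.Analysis"
begin

text \<open>Neurons are indexed 1, 2, ...; a state is a vector nat => real whose entry j is
the state of neuron j.  The input to beta_j is (u, x_1, ..., x_{j-1}); we encode
the tuple x_1..x_{j-1} as a vector nat => real with all other entries set to 0.\<close>

definition prefix_mask :: "nat \<Rightarrow> (nat \<Rightarrow> real) \<Rightarrow> (nat \<Rightarrow> real)" where
  "prefix_mask j x = (\<lambda>k. if 1 \<le> k \<and> k < j then x k else 0)"

fun rnc_state :: "(nat \<Rightarrow> real) \<Rightarrow> (nat \<Rightarrow> 'u \<Rightarrow> (nat \<Rightarrow> real) \<Rightarrow> real) \<Rightarrow> 'u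
    \<Rightarrow> (nat \<Rightarrow> real) \<Rightarrow> nat \<Rightarrow> (nat \<Rightarrow> real)" where
  "rnc_state w \<beta> u x0 0 = x0"
| "rnc_state w \<beta> u x0 (Suc t) =
     (\<lambda>j. tanh (w j * rnc_state w \<beta> u x0 t j + \<beta> j u (prefix_mask j (rnc_state w \<beta> u x0 t))))"

end

theory Submission
  imports Defs
begin

text \<open>Each neuron j sees the recursion x(t+1) = tanh(w x(t) + v(t)) with w \<ge> 0, where the input
v(t) converges by induction on j (neurons below j converge and \<beta>_j is continuous).  Since
tanh(w \<cdot> + v) is monotone, the sequence can cross a non-fixpoint y of the limit map
tanh(w \<cdot> + lim v) only finitely often: once on the side towards which the map pushes y, it stays
there.  The fixpoints of tanh(w \<cdot> + v) contain no interval, so non-fixpoints are dense, and a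
bounded sequence that eventually stays on one side of each point of a dense set converges.  The
limit is then a fixpoint by continuity.\<close>

lemma tendsto_fun_componentwise:
  fixes f :: "'a \<Rightarrow> 'b \<Rightarrow> 'c::topological_space"
  assumes "\<And>k. ((\<lambda>t. f t k) \<longlongrightarrow> l k) F"
  shows "(f \<longlongrightarrow> l) F"
proof -
  have "limitin (product_topology (\<lambda>_. euclidean) UNIV) f l F"
    unfolding limitin_componentwise using assms by (simp add: limitin_canonical_iff)
  then show ?thesis
    by (simp add: euclidean_product_topology limitin_canonical_iff)
qed

lemma exists_non_fixpoint_tanh_affine:
  fixes w v a b :: real
  assumes "a < b"
  shows "\<exists>z. a < z \<and> z < b \<and> tanh (w * z + v) \<noteq> z"
proof (rule ccontr)
  assume "\<not> ?thesis"
  then have fix_on: "\<And>z. z \<in> {a<..<b} \<Longrightarrow> tanh (w * z + v) = z" by auto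
  text \<open>Differentiating the identity tanh(w z + v) = z on the open interval.\<close>
  have square_const: "w * z\<^sup>2 = w - 1" if z: "z \<in> {a<..<b}" for z
  proof -
    have "((\<lambda>z. tanh (w * z + v)) has_field_derivative (1 - (tanh (w * z + v))\<^sup>2) * w) (at z)"
      by (rule has_field_derivative_tanh)
         (auto intro!: derivative_eq_intros simp: cosh_real_pos[THEN less_imp_neq, symmetric])
    then have "((\<lambda>z. z) has_field_derivative (1 - (tanh (w * z + v))\<^sup>2) * w) (at z)"
      by (rule has_field_derivative_transform_within_open[where S = "{a<..<b}"]) (use z fix_on in auto)
    then have "(1 - (tanh (w * z + v))\<^sup>2) * w = 1"
      using DERIV_ident DERIV_unique by blast
    then show ?thesis
      using fix_on[OF z] by (simp add: algebra_simps)
  qed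
  define z1 z2 z3 where "z1 = a + (b - a) / 4" and "z2 = a + (b - a) / 2" and "z3 = a + 3 * (b - a) / 4"
  have "z1 \<in> {a<..<b}" "z2 \<in> {a<..<b}" "z3 \<in> {a<..<b}"
    using assms by (auto simp: z1_def z2_def z3_def field_simps)
  then have squares: "w * z1\<^sup>2 = w - 1" "w * z2\<^sup>2 = w - 1" "w * z3\<^sup>2 = w - 1"
    using square_const by blast+
  then have "w \<noteq> 0" by auto
  with squares have "z1\<^sup>2 = z2\<^sup>2" "z2\<^sup>2 = z3\<^sup>2"
    by (metis mult_left_cancel)+
  then have "z1 = - z2" "z2 = - z3"
    using assms by (auto simp: z1_def z2_def z3_def power2_eq_iff)
  then show False
    using assms by (simp add: z1_def z3_def)
qed

lemma tanh_recursion_one_side_of_upward_point: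
  fixes x v :: "nat \<Rightarrow> real" and w vs y :: real
  assumes w: "w \<ge> 0" and v: "v \<longlonglongrightarrow> vs"
    and rec: "\<And>t. x (Suc t) = tanh (w * x t + v t)"
    and up: "y < tanh (w * y + vs)"
  shows "eventually (\<lambda>t. y \<le> x t) sequentially \<or> eventually (\<lambda>t. x t \<le> y) sequentially"
proof -
  have "(\<lambda>t. tanh (w * y + v t)) \<longlonglongrightarrow> tanh (w * y + vs)"
    using cosh_real_pos[of "w * y + vs"] by (intro tendsto_intros v) auto
  from order_tendstoD(1)[OF this up]
  obtain N where N: "\<And>t. t \<ge> N \<Longrightarrow> y < tanh (w * y + v t)"
    by (auto simp: eventually_sequentially)
  show ?thesis
  proof (cases "\<exists>t0\<ge>N. y \<le> x t0")
    case True
    then obtain t0 where t0: "t0 \<ge> N" "y \<le> x t0" by auto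
    have "y \<le> x t" if "t \<ge> t0" for t
      using that
    proof (induction t rule: dec_induct)
      case base
      then show ?case using t0 by simp
    next
      case (step m)
      have "y < tanh (w * y + v m)" using N step t0 by simp
      also have "\<dots> \<le> tanh (w * x m + v m)"
        using step w by (simp add: tanh_real_le_iff mult_left_mono)
      finally show ?case using rec[of m] by simp
    qed
    then show ?thesis unfolding eventually_sequentially by blast
  next
    case False
    then show ?thesis unfolding eventually_sequentially by force
  qed
qed

lemma tanh_recursion_one_side_of_non_fixpoint:
  fixes x v :: "nat \<Rightarrow> real" and w vs y :: real
  assumes w: "w \<ge> 0" and v: "v \<longlonglongrightarrow> vs"
    and rec: "\<And>t. x (Suc t) = tanh (w * x t + v t)"
    and non_fix: "tanh (w * y + vs) \<noteq> y"
  shows "eventually (\<lambda>t. y \<le> x t) sequentially \<or> eventually (\<lambda>t. x t \<le> y) sequentially"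
proof (cases "y < tanh (w * y + vs)")
  case True
  then show ?thesis using tanh_recursion_one_side_of_upward_point[OF w v rec] by blast
next
  case False
  text \<open>By oddness of tanh, the reflected sequence -x solves the recursion with input -v, for
    which -y is pushed upwards.\<close>
  have "- y < tanh (w * - y + - vs)"
    using False non_fix tanh_minus[of "w * y + vs"] by (simp add: algebra_simps)
  moreover have "(\<lambda>t. - v t) \<longlonglongrightarrow> - vs" using v by (rule tendsto_minus)
  moreover have "\<And>t. - x (Suc t) = tanh (w * - x t + - v t)"
    using rec by (metis tanh_minus minus_add_distrib mult_minus_right)
  ultimately show ?thesis
    using tanh_recursion_one_side_of_upward_point[OF w, of "\<lambda>t. - v t" "- vs" "\<lambda>t. - x t" "- y"]
    by (simp add: disj_commute)
qed

lemma convergent_if_dense_eventual_sides: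
  fixes x :: "nat \<Rightarrow> real" and M :: real
  assumes bounded: "\<And>t. \<bar>x t\<bar> \<le> M"
    and sides: "\<And>a b. a < b \<Longrightarrow> \<exists>z. a < z \<and> z < b \<and>
      (eventually (\<lambda>t. z \<le> x t) sequentially \<or> eventually (\<lambda>t. x t \<le> z) sequentially)"
  shows "convergent x"
proof -
  define A where "A = {y. eventually (\<lambda>t. y \<le> x t) sequentially}"
  have "- M \<in> A"
    unfolding A_def by (intro CollectI always_eventually allI) (metis bounded abs_le_iff minus_le_iff)
  then have A_nonempty: "A \<noteq> {}" by auto
  have "y \<le> M" if y: "y \<in> A" for y
  proof -
    obtain N where "\<And>t. t \<ge> N \<Longrightarrow> y \<le> x t"
      using y by (auto simp: A_def eventually_sequentially)
    then have "y \<le> x N" by simp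
    then show ?thesis using bounded[of N] by (simp add: abs_le_iff)
  qed
  then have A_bdd: "bdd_above A" by (rule bdd_aboveI)
  have "x \<longlonglongrightarrow> Sup A"
  proof (rule order_tendstoI)
    fix a assume "a < Sup A"
    then obtain y where "y \<in> A" "a < y"
      using less_cSup_iff[OF A_nonempty A_bdd] by auto
    then show "eventually (\<lambda>t. a < x t) sequentially"
      unfolding A_def by (auto elim: eventually_mono)
  next
    fix b assume "Sup A < b"
    then obtain z where z: "Sup A < z" "z < b"
      and z_sides: "eventually (\<lambda>t. z \<le> x t) sequentially \<or> eventually (\<lambda>t. x t \<le> z) sequentially"
      using sides by blast
    have "z \<notin> A" using cSup_upper[OF _ A_bdd] z(1) by force
    then have "eventually (\<lambda>t. x t \<le> z) sequentially"
      using z_sides by (auto simp: A_def)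
    then show "eventually (\<lambda>t. x t < b) sequentially"
      using z(2) by (auto elim: eventually_mono)
  qed
  then show ?thesis by (auto simp: convergent_def)
qed

lemma tanh_recursion_convergent:
  fixes x v :: "nat \<Rightarrow> real" and w vs :: real
  assumes w: "w \<ge> 0" and v: "v \<longlonglongrightarrow> vs"
    and rec: "\<And>t. x (Suc t) = tanh (w * x t + v t)"
  shows "convergent x"
proof (rule convergent_if_dense_eventual_sides)
  show "\<bar>x t\<bar> \<le> max 1 \<bar>x 0\<bar>" for t
  proof (cases t)
    case (Suc s)
    have "\<bar>x t\<bar> = tanh \<bar>w * x s + v s\<bar>" using rec[of s] Suc by (simp add: tanh_real_abs)
    also have "\<dots> < 1" by (rule tanh_real_lt_1)
    finally show ?thesis by simp
  qed simp
next
  fix a b :: real assume "a < b"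
  then obtain z where "a < z" "z < b" "tanh (w * z + vs) \<noteq> z"
    using exists_non_fixpoint_tanh_affine by blast
  then show "\<exists>z. a < z \<and> z < b \<and>
      (eventually (\<lambda>t. z \<le> x t) sequentially \<or> eventually (\<lambda>t. x t \<le> z) sequentially)"
    using tanh_recursion_one_side_of_non_fixpoint[OF w v rec] by blast
qed

lemma tanh_recursion_limit_fixpoint:
  fixes x v :: "nat \<Rightarrow> real" and w l vs :: real
  assumes x: "x \<longlonglongrightarrow> l" and v: "v \<longlonglongrightarrow> vs"
    and rec: "\<And>t. x (Suc t) = tanh (w * x t + v t)"
  shows "l = tanh (w * l + vs)"
proof (rule LIMSEQ_unique)
  show "(\<lambda>t. x (Suc t)) \<longlonglongrightarrow> l" using LIMSEQ_Suc[OF x] .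
  show "(\<lambda>t. x (Suc t)) \<longlonglongrightarrow> tanh (w * l + vs)"
    unfolding rec using cosh_real_pos[of "w * l + vs"] by (intro tendsto_intros x v) auto
qed

lemma rnc_state_input_tendsto:
  fixes \<beta> :: "nat \<Rightarrow> 'u::topological_space \<Rightarrow> (nat \<Rightarrow> real) \<Rightarrow> real"
  assumes \<beta>_cont: "continuous_on UNIV (\<lambda>p. \<beta> j (fst p) (snd p))"
    and below: "\<And>k. 1 \<le> k \<Longrightarrow> k < j \<Longrightarrow> convergent (\<lambda>t. rnc_state w \<beta> u x0 t k)"
  shows "(\<lambda>t. \<beta> j u (prefix_mask j (rnc_state w \<beta> u x0 t))) \<longlonglongrightarrow>
    \<beta> j u (prefix_mask j (\<lambda>k. lim (\<lambda>t. rnc_state w \<beta> u x0 t k)))"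
proof -
  let ?xs = "\<lambda>k. lim (\<lambda>t. rnc_state w \<beta> u x0 t k)"
  have "(\<lambda>t. prefix_mask j (rnc_state w \<beta> u x0 t)) \<longlonglongrightarrow> prefix_mask j ?xs"
  proof (rule tendsto_fun_componentwise)
    fix k
    show "(\<lambda>t. prefix_mask j (rnc_state w \<beta> u x0 t) k) \<longlonglongrightarrow> prefix_mask j ?xs k"
      using below[of k] by (auto simp: prefix_mask_def convergent_LIMSEQ_iff)
  qed
  from continuous_on_tendsto_compose[OF \<beta>_cont tendsto_Pair[OF tendsto_const this]]
  show ?thesis by simp
qed

theorem proposition5:
  fixes n i :: nat
    and w :: "nat \<Rightarrow> real"
    and \<beta> :: "nat \<Rightarrow> 'u::topological_space \<Rightarrow> (nat \<Rightarrow> real) \<Rightarrow> real"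
    and u :: 'u
    and x0 :: "nat \<Rightarrow> real"
  assumes w_nonneg: "\<forall>j\<in>{1..n}. w j \<ge> 0"
    and \<beta>_cont: "\<forall>j\<in>{1..n}. continuous_on UNIV (\<lambda>p. \<beta> j (fst p) (snd p))"
    and i: "i \<in> {1..n}"
  shows "(\<forall>j\<in>{1..i}. convergent (\<lambda>t. rnc_state w \<beta> u x0 t j)) \<and>
         (let xs = (\<lambda>j. lim (\<lambda>t. rnc_state w \<beta> u x0 t j))
          in xs i = tanh (w i * xs i + \<beta> i u (prefix_mask i xs)))"
proof -
  let ?x = "\<lambda>j t. rnc_state w \<beta> u x0 t j"
  have convergent: "convergent (?x j)" if "1 \<le> j" "j \<le> i" for j
    using that
  proof (induction j rule: less_induct)
    case (less j)
    then have j: "j \<in> {1..n}" using i by auto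
    have input: "(\<lambda>t. \<beta> j u (prefix_mask j (rnc_state w \<beta> u x0 t))) \<longlonglongrightarrow>
        \<beta> j u (prefix_mask j (\<lambda>k. lim (?x k)))"
      by (rule rnc_state_input_tendsto) (use less j \<beta>_cont in auto)
    show ?case
      by (rule tanh_recursion_convergent[where w = "w j", OF _ input]) (use j w_nonneg in auto)
  qed
  have limit: "?x i \<longlonglongrightarrow> lim (?x i)"
    using convergent i by (simp add: convergent_LIMSEQ_iff)
  have input: "(\<lambda>t. \<beta> i u (prefix_mask i (rnc_state w \<beta> u x0 t))) \<longlonglongrightarrow>
      \<beta> i u (prefix_mask i (\<lambda>k. lim (?x k)))"
    by (rule rnc_state_input_tendsto) (use convergent i \<beta>_cont in auto)
  have "lim (?x i) = tanh (w i * lim (?x i) + \<beta> i u (prefix_mask i (\<lambda>j. lim (?x j))))"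
    by (rule tanh_recursion_limit_fixpoint[OF limit input]) simp
  then show ?thesis
    using convergent by (auto simp: Let_def)
qed

end
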